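(* For every $n\in\{0,1,2,\dots\}$, \[ {}_2F_1\Big(n+\tfrac12,n+1;n+\tfrac32;-1\Big)=\frac{(2n+1)!!}{(2n)!!}\,\frac{\pi}{4}+\frac{2n+1}{2^{2n}}\sum_{k=1}^{n}(-1)^k\binom{2n-k}{n}\frac{2^{k/2}}{k}\sin\frac{3k\pi}{4}. \]
   Context: ${}_2F_1(\alpha,\beta;\gamma;z)=\sum_{n\ge0}\frac{(\alpha)_n(\beta)_n}{(\gamma)_n}\frac{z^n}{n!}$ is Gauss' hypergeometric function, with $(a)_n=a(a+1)\cdots(a+n-1)$. Its value at $-1$ is that of its analytic continuation to $\mathbb{C}\setminus(1,\infty)$. $(2n)!!=2^nn!$ with $0!!=1$, and $(2n+1)!!=1\cdot3\cdots(2n+1)$. An empty sum is $0$. *)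

theory Defs
  imports "HOL-Complex_Analysis.Complex_Analysis"
begin

text \<open>Gauss' hypergeometric series (as a power series; meaningful for norm z < 1).\<close>
definition hyp2F1_series :: "complex \<Rightarrow> complex \<Rightarrow> complex \<Rightarrow> complex \<Rightarrow> complex" where
  "hyp2F1_series a b c z =
     (\<Sum>n. pochhammer a n * pochhammer b n / pochhammer c n * z ^ n / fact n)"

definition cut_plane :: "complex set" where
  "cut_plane = - {complex_of_real x | x. x \<ge> 1}"

text \<open>Value of the analytic continuation of 2F1 to the cut plane: the value at z of the
  (unique, by the identity theorem) holomorphic function on the cut plane that agrees
  with the hypergeometric series on the open unit disc.\<close>
definition hyp2F1 :: "complex \<Rightarrow> complex \<Rightarrow> complex \<Rightarrow> complex \<Rightarrow> complex" where
  "hyp2F1 a b c z =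
     (THE v. \<exists>f. f holomorphic_on cut_plane \<and>
                 (\<forall>w\<in>ball 0 1. f w = hyp2F1_series a b c w) \<and> f z = v)"

fun dfact :: "nat \<Rightarrow> nat" where
  "dfact 0 = 1"
| "dfact (Suc 0) = 1"
| "dfact (Suc (Suc m)) = Suc (Suc m) * dfact m"

end

theory Submission
  imports Defs
begin

(* On the unit disc the series equals (2n+1) times the integral of t^(2n) / (1 - z t^2)^(n+1)
   over [0, 1]: expand the integrand binomially and integrate termwise. The integral is
   holomorphic on the cut plane, so by the identity theorem it is the analytic continuation,
   and at z = -1 the value is (2n+1) J n with J n the integral of t^(2n) / (1 + t^2)^(n+1).
   Differentiating t^(2n+1) / (1 + t^2)^(n+1) gives (2n+2) J (n+1) = (2n+1) J n - 2^-(n+1),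
   and J 0 = pi/4. With W n = sum_k (2n-k choose n) (1-i)^k / k, a coefficientwise binomial
   identity and the evaluation of a partial binomial sum at 1-i give
   (2n+2) Im W (n+1) = 4 (2n+1) Im W n - 2^(n+1). As Im (1-i)^k = (-1)^k 2^(k/2) sin (3 k pi / 4),
   both sides of the formula obey the same first-order recurrence. *)

section \<open>Analytic continuation by an Euler integral\<close>

lemma mem_cut_plane_iff: "z \<in> cut_plane \<longleftrightarrow> Im z \<noteq> 0 \<or> Re z < 1"
  by (auto simp: cut_plane_def complex_eq_iff)

lemma open_cut_plane: "open cut_plane"
proof -
  have eq: "cut_plane = - {z. Im z = 0 \<and> Re z \<ge> 1}"
    using mem_cut_plane_iff by auto
  show ?thesis
    unfolding eq by (intro open_Compl closed_Collect_conj closed_Collect_eq closed_Collect_le continuous_intros)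
qed

lemma connected_cut_plane: "connected cut_plane"
proof (rule starlike_imp_connected)
  have "u *\<^sub>R z \<in> cut_plane" if "z \<in> cut_plane" "0 \<le> u" "u \<le> 1" for z u
  proof (cases "Im z \<noteq> 0 \<and> u \<noteq> 0")
    case False
    with that have "u * Re z < 1"
      using mult_left_le_one_le[of "Re z" u] mult_nonneg_nonpos[of u "Re z"]
      by (cases "0 \<le> Re z") (auto simp: mem_cut_plane_iff)
    then show ?thesis
      by (simp add: mem_cut_plane_iff)
  qed (auto simp: mem_cut_plane_iff)
  moreover have "0 \<in> cut_plane"
    by (simp add: mem_cut_plane_iff)
  ultimately show "starlike cut_plane"
    unfolding starlike_def by (intro bexI[of _ 0]) (auto simp: in_segment)
qed

lemma ball_subset_cut_plane: "ball 0 1 \<subseteq> cut_plane"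
  by (auto simp: mem_cut_plane_iff intro: le_less_trans[OF complex_Re_le_cmod])

lemma hyp2F1_eqI:
  assumes "f holomorphic_on cut_plane" "\<And>w. w \<in> ball 0 1 \<Longrightarrow> f w = hyp2F1_series a b c w"
    and "z \<in> cut_plane"
  shows "hyp2F1 a b c z = f z"
  unfolding hyp2F1_def
proof (rule the_equality)
  fix v assume "\<exists>g. g holomorphic_on cut_plane \<and> (\<forall>w\<in>ball 0 1. g w = hyp2F1_series a b c w) \<and> g z = v"
  then obtain g where "g holomorphic_on cut_plane" "\<forall>w\<in>ball 0 1. g w = hyp2F1_series a b c w" "g z = v"
    by blast
  with assms show "v = f z"
    using analytic_continuation_open[OF open_ball open_cut_plane _ connected_cut_plane ball_subset_cut_plane]
    by force
qed (use assms in blast)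

(* Up to the factor 2n + 1, the integrand of Euler's integral for 2F1(n + 1/2, n + 1; n + 3/2; z)
   after the substitution s = t^2. *)
definition euler_kernel :: "nat \<Rightarrow> complex \<Rightarrow> real \<Rightarrow> complex" where
  "euler_kernel n z t = of_real t ^ (2*n) / (1 - z * of_real t ^ 2) ^ (n+1)"

definition euler_integral :: "nat \<Rightarrow> complex \<Rightarrow> complex" where
  "euler_integral n z = integral {0..1} (euler_kernel n z)"

lemma euler_kernel_denom_nonzero:
  assumes "z \<in> cut_plane" "t \<in> {0..1}"
  shows "1 - z * of_real t ^ 2 \<noteq> 0"
proof
  assume "1 - z * of_real t ^ 2 = 0"
  then have zt: "z * of_real (t^2) = 1"
    by simp
  then have "t \<noteq> 0"
    by auto
  with zt have "z = of_real (1 / t^2)"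
    by (simp add: field_simps)
  moreover have "1 \<le> 1 / t^2"
    using assms(2) \<open>t \<noteq> 0\<close> by (simp add: power_le_one)
  ultimately show False
    using assms(1) by (simp add: mem_cut_plane_iff)
qed

lemma euler_kernel_has_derivative:
  assumes "z \<in> cut_plane" "t \<in> {0..1}"
  shows "((\<lambda>z. euler_kernel n z t) has_field_derivative
           of_nat (n+1) * of_real t ^ (2*n+2) / (1 - z * of_real t ^ 2) ^ (n+2)) (at z)"
proof -
  define w where "w = 1 - z * of_real t ^ 2"
  have "w \<noteq> 0"
    unfolding w_def using assms by (rule euler_kernel_denom_nonzero)
  have "((\<lambda>z. (1 - z * of_real t ^ 2) ^ (n+1)) has_field_derivative
          of_nat (n+1) * w ^ n * - (of_real t ^ 2)) (at z)"
  proof -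
    have "((\<lambda>z. 1 - z * of_real t ^ 2) has_field_derivative - (of_real t ^ 2)) (at z)"
      by (auto intro!: derivative_eq_intros)
    from DERIV_power[OF this, of "n+1"] show ?thesis
      unfolding w_def by (simp add: mult_ac)
  qed
  from DERIV_divide[OF DERIV_const this power_not_zero[OF \<open>w \<noteq> 0\<close>[unfolded w_def]],
      of "of_real t ^ (2*n)"]
  show ?thesis
    unfolding euler_kernel_def w_def[symmetric]
  proof (rule DERIV_cong)
    have "w ^ (n+1) * w ^ (n+1) = w ^ n * w ^ (n+2)"
      by (simp flip: power_add)
    with \<open>w \<noteq> 0\<close> show "(0 * w ^ (n+1) - of_real t ^ (2*n) * (of_nat (n+1) * w ^ n * - (of_real t ^ 2)))
        / (w ^ (n+1) * w ^ (n+1)) = of_nat (n+1) * of_real t ^ (2*n+2) / w ^ (n+2)"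
      by (simp add: field_simps power_add power2_eq_square)
  qed
qed

lemma holomorphic_on_euler_integral: "euler_integral n holomorphic_on cut_plane"
proof -
  have "\<exists>f'. DERIV (euler_integral n) z0 :> f'" if "z0 \<in> cut_plane" for z0
  proof -
    obtain e where e: "e > 0" "ball z0 e \<subseteq> cut_plane"
      using open_cut_plane \<open>z0 \<in> cut_plane\<close> open_contains_ball by blast
    have nz: "z * of_real t ^ 2 \<noteq> 1" if "z \<in> ball z0 e" "t \<in> {0..1}" for z t
      using e(2) that euler_kernel_denom_nonzero by fastforce
    have "(\<lambda>z. integral (cbox 0 1) (euler_kernel n z)) holomorphic_on ball z0 e"
    proof (rule leibniz_rule_holomorphic)
      fix z t assume "z \<in> ball z0 e" "t \<in> cbox (0::real) 1"
      with e show "((\<lambda>z. euler_kernel n z t) has_field_derivative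
          of_nat (n+1) * of_real t ^ (2*n+2) / (1 - z * of_real t ^ 2) ^ (n+2)) (at z within ball z0 e)"
        by (intro has_field_derivative_at_within[OF euler_kernel_has_derivative]) auto
    next
      fix z assume "z \<in> ball z0 e"
      then have "continuous_on {0..1} (euler_kernel n z)"
        unfolding euler_kernel_def by (intro continuous_intros) (simp add: nz)
      then show "euler_kernel n z integrable_on cbox 0 1"
        by (simp add: integrable_continuous_real)
    next
      show "continuous_on (ball z0 e \<times> cbox 0 1)
          (\<lambda>(z, t). of_nat (n+1) * of_real t ^ (2*n+2) / (1 - z * of_real t ^ 2) ^ (n+2))"
        by (auto simp: case_prod_beta nz intro!: continuous_intros)
    qed simp
    then show ?thesis
      using e(1) unfolding holomorphic_on_open[OF open_ball] euler_integral_def[abs_def] by simp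
  qed
  then show ?thesis
    using open_cut_plane by (simp add: holomorphic_on_open)
qed

lemma sums_binomial_inverse_power:
  fixes w :: complex
  assumes "norm w < 1"
  shows "(\<lambda>k. of_nat ((n+k) choose k) * w^k) sums inverse ((1-w)^(n+1))"
proof -
  have "(\<lambda>k. (- of_nat (n+1) gchoose k) * (-w)^k) sums (1 + -w) powr (- of_nat (n+1))"
    using assms by (intro gen_binomial_complex) simp
  moreover have "(- of_nat (n+1) gchoose k) * (-w)^k = of_nat ((n+k) choose k) * w^k" for k
  proof -
    have "(- of_nat (n+1) gchoose k) = (-1)^k * (of_nat (n+k) gchoose k :: complex)"
      by (subst gbinomial_negated_upper) (simp add: algebra_simps)
    then have "(- of_nat (n+1) gchoose k) * (-w)^k = ((-1)^k * (-1)^k) * (of_nat ((n+k) choose k) * w^k)"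
      by (simp only: power_minus[of w] binomial_gbinomial mult_ac)
    then show ?thesis
      by simp
  qed
  moreover have "(1 - w) powr of_nat (n+1) = (1 - w)^(n+1)"
    using assms by (intro powr_nat') auto
  then have "(1 + -w) powr (- of_nat (n+1)) = inverse ((1-w)^(n+1))"
    using powr_minus[of "1 - w" "of_nat (n+1)"] by simp
  ultimately show ?thesis
    by simp
qed

lemma has_integral_of_real_power:
  "((\<lambda>t. of_real t ^ p :: complex) has_integral 1 / of_nat (Suc p)) {0..1}"
proof -
  have "((\<lambda>t. t ^ Suc p / real (Suc p)) has_real_derivative t ^ p) (at t)" for t :: real
    using DERIV_cdivide[OF DERIV_pow[of "Suc p" t], of "real (Suc p)"] by simp
  then have "((\<lambda>t. t ^ p) has_integral 1 / real (Suc p)) {0..1}"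
    using fundamental_theorem_of_calculus[of 0 1 "\<lambda>t. t ^ Suc p / real (Suc p)" "\<lambda>t. t ^ p"]
    by (simp add: has_real_derivative_iff_has_vector_derivative[symmetric] has_field_derivative_at_within)
  from has_integral_of_real[OF this, where 'b=complex] show ?thesis
    by simp
qed

lemma sums_integral_of_uniform_limit:
  fixes u :: "nat \<Rightarrow> 'b::ordered_euclidean_space \<Rightarrow> 'c::banach"
  assumes "uniform_limit {a..b} (\<lambda>N t. \<Sum>k<N. u k t) f sequentially"
    and "\<And>k. continuous_on {a..b} (u k)"
    and "\<And>k. (u k has_integral c k) {a..b}"
  shows "c sums integral {a..b} f"
proof -
  obtain I J where I: "\<And>N. ((\<lambda>t. \<Sum>k<N. u k t) has_integral I N) {a..b}"
    and J: "(f has_integral J) {a..b}" and "I \<longlonglongrightarrow> J"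
    using uniform_limit_integral[OF assms(1)] assms(2)
    by (metis continuous_on_sum finite_lessThan trivial_limit_sequentially)
  moreover have "I = (\<lambda>N. \<Sum>k<N. c k)"
    by (rule ext, rule has_integral_unique[OF I has_integral_sum[OF finite_lessThan assms(3)]])
  ultimately show ?thesis
    unfolding sums_def by (simp add: integral_unique)
qed

lemma sums_euler_integral:
  assumes "norm z < 1"
  shows "(\<lambda>k. of_nat ((n+k) choose k) * z^k / of_nat (2*n+2*k+1)) sums euler_integral n z"
proof -
  define u where "u = (\<lambda>k t. of_nat ((n+k) choose k) * z^k * of_real t ^ (2*n+2*k))"
  define M where "M k = real ((n+k) choose k) * norm z ^ k" for k
  have "summable (\<lambda>k. of_real (M k) :: complex)"
    using sums_binomial_inverse_power[of "of_real (norm z)" n] assms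
    by (auto simp: M_def sums_iff)
  then have "summable M"
    by (simp only: summable_of_real_iff)
  moreover have "norm (u k t) \<le> M k" if "t \<in> {0..1}" for k t
    using that by (auto simp: u_def M_def norm_mult norm_power intro!: mult_left_mono mult_left_le power_le_one)
  ultimately have "uniform_limit {0..1} (\<lambda>N t. \<Sum>k<N. u k t) (\<lambda>t. \<Sum>k. u k t) sequentially"
    by (intro Weierstrass_m_test) auto
  moreover have "(\<Sum>k. u k t) = euler_kernel n z t" if "t \<in> {0..1}" for t
  proof -
    have "norm (z * of_real t ^ 2) \<le> norm z"
      using that by (simp add: norm_mult norm_power abs_square_le_1 mult_left_le)
    with assms have "norm (z * of_real t ^ 2) < 1"
      by linarith
    from sums_mult[OF sums_binomial_inverse_power[OF this, of n], of "of_real t ^ (2*n)"]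
    have "(\<lambda>k. u k t) sums (of_real t ^ (2*n) * inverse ((1 - z * of_real t ^ 2) ^ (n+1)))"
      by (simp add: u_def power_add power_mult_distrib mult_ac flip: power_mult)
    then show ?thesis
      by (simp add: sums_iff euler_kernel_def divide_inverse)
  qed
  ultimately have "uniform_limit {0..1} (\<lambda>N t. \<Sum>k<N. u k t) (euler_kernel n z) sequentially"
    by (elim uniform_limit_cong'[THEN iffD1, rotated 2]) auto
  then show ?thesis
    unfolding euler_integral_def
  proof (rule sums_integral_of_uniform_limit)
    show "continuous_on {0..1} (u k)" for k
      unfolding u_def by (intro continuous_intros)
    show "(u k has_integral of_nat ((n+k) choose k) * z^k / of_nat (2*n+2*k+1)) {0..1}" for k
      using has_integral_mult_right[OF has_integral_of_real_power[of "2*n+2*k"]]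
      by (simp add: u_def)
  qed
qed

lemma pochhammer_half_ratio:
  "pochhammer (of_nat n + 1/2 :: complex) k / pochhammer (of_nat n + 3/2) k
     = of_nat (2*n+1) / of_nat (2*n+2*k+1)"
proof -
  define a :: complex where "a = of_nat n + 1/2"
  have "(a + of_nat k) * pochhammer a k = a * pochhammer (a+1) k"
    by (metis pochhammer_rec pochhammer_rec')
  moreover have "pochhammer (a+1) k \<noteq> 0"
    unfolding pochhammer_eq_0_iff by (auto simp: a_def complex_eq_iff)
  moreover have "a + of_nat k \<noteq> 0"
    by (auto simp: a_def complex_eq_iff)
  ultimately have "pochhammer a k / pochhammer (a+1) k = a / (a + of_nat k)"
    by (simp add: field_simps)
  also have "\<dots> = (2 * a) / (2 * (a + of_nat k))"
    by (simp only: mult_divide_mult_cancel_left zero_neq_numeral [symmetric] not_False_eq_True)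
  also have "\<dots> = of_nat (2*n+1) / of_nat (2*n+2*k+1)"
    by (simp add: a_def algebra_simps)
  finally show ?thesis
    by (simp add: a_def add.assoc)
qed

lemma pochhammer_div_fact_eq_binomial: "pochhammer (of_nat n + 1 :: complex) k / fact k = of_nat ((n+k) choose k)"
  using gbinomial_pochhammer'[of "of_nat (n+k) :: complex" k] by (simp add: binomial_gbinomial)

lemma hyp2F1_series_eq_euler_integral:
  assumes "norm z < 1"
  shows "hyp2F1_series (of_nat n + 1/2) (of_nat n + 1) (of_nat n + 3/2) z = of_nat (2*n+1) * euler_integral n z"
proof -
  have "pochhammer (of_nat n + 1/2) k * pochhammer (of_nat n + 1) k / pochhammer (of_nat n + 3/2) k * z^k / fact k
     = of_nat (2*n+1) * (of_nat ((n+k) choose k) * z^k / of_nat (2*n+2*k+1))" for k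
  proof -
    have "pochhammer (of_nat n + 1/2) k * pochhammer (of_nat n + 1) k / pochhammer (of_nat n + 3/2) k * z^k / fact k
        = (pochhammer (of_nat n + 1/2) k / pochhammer (of_nat n + 3/2) k)
          * (pochhammer (of_nat n + 1) k / fact k) * z^k"
      by (simp only: divide_inverse mult_ac)
    also have "\<dots> = of_nat (2*n+1) / of_nat (2*n+2*k+1) * of_nat ((n+k) choose k) * z^k"
      by (simp only: pochhammer_half_ratio pochhammer_div_fact_eq_binomial)
    finally show ?thesis
      by (simp only: divide_inverse mult_ac)
  qed
  with sums_mult[OF sums_euler_integral[OF assms], of "of_nat (2*n+1)"] show ?thesis
    by (simp add: hyp2F1_series_def sums_iff)
qed

lemma hyp2F1_eq_euler_integral:
  assumes "z \<in> cut_plane"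
  shows "hyp2F1 (of_nat n + 1/2) (of_nat n + 1) (of_nat n + 3/2) z = of_nat (2*n+1) * euler_integral n z"
proof (rule hyp2F1_eqI)
  show "(\<lambda>z. of_nat (2*n+1) * euler_integral n z) holomorphic_on cut_plane"
    by (intro holomorphic_intros holomorphic_on_euler_integral)
qed (simp_all add: assms hyp2F1_series_eq_euler_integral)

section \<open>A truncated Wallis integral\<close>

(* The substitution t = tan u turns this into the integral of (sin u)^(2n) over [0, pi/4]. *)
definition wallis_integral :: "nat \<Rightarrow> real" where
  "wallis_integral n = integral {0..1} (\<lambda>t. t^(2*n) / (1 + t^2)^(n+1))"

lemma wallis_integral_has_integral:
  "((\<lambda>t. t^(2*n) / (1 + t^2)^(n+1)) has_integral wallis_integral n) {0..1}"
proof -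
  have "continuous_on {0..1} (\<lambda>t. t^(2*n) / (1 + t^2)^(n+1) :: real)"
    by (intro continuous_intros) (auto simp: add_nonneg_eq_0_iff)
  then show ?thesis
    unfolding wallis_integral_def using integrable_continuous_real by blast
qed

lemma wallis_integral_0: "wallis_integral 0 = pi / 4"
proof -
  have "(arctan has_real_derivative 1 / (1 + t^2)) (at t)" for t
    using DERIV_arctan[of t] by (simp add: divide_inverse)
  then have "((\<lambda>t. 1 / (1 + t^2)) has_integral arctan 1 - arctan 0) {0..1}"
    by (intro fundamental_theorem_of_calculus)
       (simp_all add: has_real_derivative_iff_has_vector_derivative[symmetric] has_field_derivative_at_within)
  then show ?thesis
    by (simp add: wallis_integral_def integral_unique)
qed

lemma wallis_integral_Suc:
  "(2 * real n + 2) * wallis_integral (n+1) = (2 * real n + 1) * wallis_integral n - 1 / 2^(n+1)"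
proof -
  define g where "g n t = t^(2*n) / (1 + t^2)^(n+1)" for n and t :: real
  define f where "f t = t^(2*n+1) / (1 + t^2)^(n+1)" for t :: real
  have "(f has_real_derivative (2 * real n + 1) * g n t - (2 * real n + 2) * g (n+1) t) (at t)" for t
  proof -
    define q where "q = 1 + t^2"
    have "q \<noteq> 0"
      by (simp add: q_def add_nonneg_eq_0_iff)
    have "((\<lambda>t. 1 + t^2) has_real_derivative 2 * t) (at t)"
      by (auto intro!: derivative_eq_intros)
    from DERIV_power[OF this, of "n+1"]
    have "((\<lambda>t. (1 + t^2)^(n+1)) has_real_derivative real (n+1) * q^n * (2 * t)) (at t)"
      by (simp add: q_def mult_ac)
    from DERIV_divide[OF DERIV_pow[of "2*n+1" t] this power_not_zero[OF \<open>q \<noteq> 0\<close>[unfolded q_def]]]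
    show ?thesis
      unfolding f_def
    proof (rule DERIV_cong)
      have pw: "t ^ (2*n+1 - Suc 0) = t ^ (2*n)" "t ^ (2*n+1) = t ^ (2*n) * t"
          "t ^ (2*(n+1)) = t ^ (2*n) * t * t" "q ^ (n+1) = q ^ n * q" "q ^ (n+1+1) = q ^ n * q * q"
        by (simp_all add: algebra_simps)
      from \<open>q \<noteq> 0\<close> have "q ^ n \<noteq> 0"
        by simp
      with \<open>q \<noteq> 0\<close> show "(real (2*n+1) * t ^ (2*n+1 - Suc 0) * (1 + t^2) ^ (n+1)
            - t ^ (2*n+1) * (real (n+1) * q^n * (2 * t))) / ((1 + t^2) ^ (n+1) * (1 + t^2) ^ (n+1))
          = (2 * real n + 1) * g n t - (2 * real n + 2) * g (n+1) t"
        unfolding g_def q_def[symmetric] pw by (simp add: field_simps)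
    qed
  qed
  then have "((\<lambda>t. (2 * real n + 1) * g n t - (2 * real n + 2) * g (n+1) t) has_integral f 1 - f 0) {0..1}"
    by (intro fundamental_theorem_of_calculus)
       (simp_all add: has_real_derivative_iff_has_vector_derivative[symmetric] has_field_derivative_at_within)
  moreover have "((\<lambda>t. (2 * real n + 1) * g n t - (2 * real n + 2) * g (n+1) t) has_integral
      (2 * real n + 1) * wallis_integral n - (2 * real n + 2) * wallis_integral (n+1)) {0..1}"
    unfolding g_def by (intro has_integral_diff has_integral_mult_right wallis_integral_has_integral)
  ultimately have "(2 * real n + 1) * wallis_integral n - (2 * real n + 2) * wallis_integral (n+1) = f 1 - f 0"
    by (rule has_integral_unique[rotated])
  then show ?thesis
    by (simp add: f_def)
qed

lemma euler_integral_minus_one: "euler_integral n (-1) = of_real (wallis_integral n)"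
proof -
  have "euler_kernel n (-1) = (\<lambda>t. of_real (t^(2*n) / (1 + t^2)^(n+1)))"
    by (simp add: euler_kernel_def fun_eq_iff)
  with has_integral_of_real[OF wallis_integral_has_integral, where 'b=complex] show ?thesis
    by (simp add: euler_integral_def integral_unique)
qed

section \<open>Sums along a column of Pascal's triangle\<close>

(* x times the derivative of binom_col_sum n x is binom_col_poly n x - (2n choose n). *)
definition binom_col_poly :: "nat \<Rightarrow> 'a::comm_semiring_1 \<Rightarrow> 'a" where
  "binom_col_poly n x = (\<Sum>k\<le>n. of_nat ((2*n-k) choose n) * x^k)"

definition binom_col_sum :: "nat \<Rightarrow> 'a::field \<Rightarrow> 'a" where
  "binom_col_sum n x = (\<Sum>k=1..n. of_nat ((2*n-k) choose n) * x^k / of_nat k)"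

lemma binomial_column_rec:
  assumes "1 \<le> k" "k \<le> n"
  shows "(2*n+2) * ((2*n+2-k) choose (n+1)) + 4*k * ((2*n-k) choose n)
       = 4*(2*n+1) * ((2*n-k) choose n) + 2*k * ((2*n+1-k) choose n)"
proof -
  obtain r where n: "n = r + k"
    using assms(2) le_Suc_ex by (metis add.commute)
  define p where "p = 2*r + k + 1"
  have p: "2*n+2-k = Suc p" "2*n-k = p - 1" "2*n+1-k = p" "p - n = r + 1"
    by (simp_all add: n p_def)
  have A: "Suc n * (Suc p choose Suc n) = Suc p * (p choose n)"
    by (rule Suc_times_binomial)
  have B: "(r + 1) * (p choose n) = p * ((p - 1) choose n)"
    using binomial_absorb_comp[of p n] by (simp add: p(4))
  show ?thesis
    unfolding p using A B by (simp add: algebra_simps n p_def)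
qed

lemma binom_col_sum_Suc_eq:
  "binom_col_sum (n+1) x = (\<Sum>k=1..n. of_nat ((2*n+2-k) choose (n+1)) * x^k / of_nat k) + x^(n+1) / of_nat (n+1)"
  by (simp add: binom_col_sum_def mult_2_right del: binomial_Suc_Suc)

lemma mult_binom_col_poly:
  "x * binom_col_poly n x = (\<Sum>k=1..n. of_nat ((2*n+1-k) choose n) * x^k) + x^(n+1)"
proof -
  have "x * binom_col_poly n x = (\<Sum>k=0..n. of_nat ((2*n+1 - Suc k) choose n) * x^(Suc k))"
    by (simp add: binom_col_poly_def sum_distrib_left atMost_atLeast0 mult_ac del: binomial_Suc_Suc)
  also have "\<dots> = (\<Sum>k=Suc 0..Suc n. of_nat ((2*n+1-k) choose n) * x^k)"
    by (rule sum.shift_bounds_cl_Suc_ivl [symmetric])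
  finally show ?thesis
    by (simp add: mult_2_right del: binomial_Suc_Suc)
qed

lemma binom_col_poly_minus_central_binomial:
  fixes x :: "'a::comm_ring_1"
  shows "binom_col_poly n x - of_nat ((2*n) choose n) = (\<Sum>k=1..n. of_nat ((2*n-k) choose n) * x^k)"
  by (simp add: binom_col_poly_def atMost_atLeast0 sum.atLeast_Suc_atMost del: binomial_Suc_Suc)

lemma binom_col_sum_Suc:
  fixes x :: "'a::field_char_0"
  shows "of_nat (2*n+2) * binom_col_sum (n+1) x - of_nat (4*(2*n+1)) * binom_col_sum n x
       = 2 * x * binom_col_poly n x - 4 * (binom_col_poly n x - of_nat ((2*n) choose n))"
proof -
  define a where "a k = (of_nat ((2*n+2-k) choose (n+1)) :: 'a)" for k
  define b where "b k = (of_nat ((2*n-k) choose n) :: 'a)" for k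
  define c where "c k = (of_nat ((2*n+1-k) choose n) :: 'a)" for k
  have coeff: "of_nat (2*n+2) * (a k * x^k / of_nat k) - of_nat (4*(2*n+1)) * (b k * x^k / of_nat k)
      = 2 * (c k * x^k) - 4 * (b k * x^k)" if "k \<in> {1..n}" for k
  proof -
    have "of_nat (2*n+2) * a k + of_nat (4*k) * b k = of_nat (4*(2*n+1)) * b k + of_nat (2*k) * c k"
      using binomial_column_rec[of k n] that unfolding a_def b_def c_def atLeastAtMost_iff
      by (simp only: of_nat_mult [symmetric] of_nat_add [symmetric] of_nat_eq_iff mult.assoc)
    then have "of_nat (2*n+2) * a k - of_nat (4*(2*n+1)) * b k = of_nat k * (2 * c k - 4 * b k)"
      by (simp add: algebra_simps)
    moreover have "(of_nat k :: 'a) \<noteq> 0"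
      using that by simp
    ultimately have "(of_nat (2*n+2) * a k - of_nat (4*(2*n+1)) * b k) * x^k / of_nat k
        = (2 * c k - 4 * b k) * x^k"
      by simp
    then show ?thesis
      by (simp add: divide_inverse algebra_simps)
  qed
  have "of_nat (2*n+2) * binom_col_sum (n+1) x - of_nat (4*(2*n+1)) * binom_col_sum n x
      = (\<Sum>k=1..n. of_nat (2*n+2) * (a k * x^k / of_nat k) - of_nat (4*(2*n+1)) * (b k * x^k / of_nat k))
        + of_nat (2*n+2) * (x^(n+1) / of_nat (n+1))"
    unfolding binom_col_sum_Suc_eq[of n x, folded a_def] binom_col_sum_def[of n x, folded b_def]
      sum_subtractf distrib_left sum_distrib_left
    by (simp only: algebra_simps)
  also have "\<dots> = (\<Sum>k=1..n. 2 * (c k * x^k) - 4 * (b k * x^k)) + 2 * x^(n+1)"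
  proof (intro arg_cong2[where f = "(+)"] sum.cong)
    have "(of_nat (2*n+2) :: 'a) = 2 * of_nat (n+1)"
      by simp
    then show "of_nat (2*n+2) * (x^(n+1) / of_nat (n+1)) = 2 * x^(n+1)"
      by (simp del: of_nat_add of_nat_Suc)
  qed (simp_all only: coeff)
  also have "\<dots> = 2 * x * binom_col_poly n x - 4 * (binom_col_poly n x - of_nat ((2*n) choose n))"
    unfolding mult.assoc mult_binom_col_poly[of x n, folded c_def] binom_col_poly_minus_central_binomial[of n x, folded b_def]
    by (simp add: sum_distrib_left sum_subtractf del: binomial_Suc_Suc)
  finally show ?thesis .
qed

lemma binom_col_poly_shift:
  fixes y :: "'a::field_char_0"
  shows "binom_col_poly n (1 + y) = (\<Sum>k\<le>n. of_nat ((2*n+1) choose k) * y^(n-k))"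
proof -
  have "(\<Sum>k\<le>n. of_nat ((2*n+1) choose k) * y^(n-k)) = (\<Sum>k\<le>n. of_nat ((n+k) choose k) * (1 + y)^(n-k))"
  proof -
    have "of_nat n + (of_nat n + 1) = (of_nat (2*n+1) :: 'a)" and "of_nat k + (of_nat n + 1) - 1 = (of_nat (n+k) :: 'a)" for k
      by simp_all
    then have "(of_nat n + (of_nat n + 1) gchoose k) = (of_nat ((2*n+1) choose k) :: 'a)"
      and "(of_nat k + (of_nat n + 1) - 1 gchoose k) = (of_nat ((n+k) choose k) :: 'a)" for k
      by (simp_all only: binomial_gbinomial)
    with gbinomial_partial_sum_poly_xpos[of n "of_nat n + 1" 1 y] show ?thesis
      by (simp only: power_one mult_1_right)
  qed
  also have "\<dots> = (\<Sum>k\<le>n. of_nat ((2*n-k) choose n) * (1 + y)^k)"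
  proof (rule sum.reindex_bij_witness[of _ "\<lambda>k. n - k" "\<lambda>k. n - k"])
    fix k assume "k \<in> {..n}"
    then show "of_nat ((2*n - (n-k)) choose n) * (1 + y)^(n-k) = of_nat ((n+k) choose k) * (1 + y)^(n-k)"
      using binomial_symmetric[of k "n+k"] by (simp add: mult_2)
  qed auto
  finally show ?thesis
    by (simp add: binom_col_poly_def)
qed

lemma binomial_odd_power_split:
  fixes x y :: "'a::comm_ring_1"
  assumes "x * y = 1"
  shows "(1 + x)^(2*n+1) * y^n = (\<Sum>k\<le>n. of_nat ((2*n+1) choose k) * (y^(n-k) + x^(n+1-k)))"
proof -
  have xy: "x^k * y^k = 1" for k
    using assms by (simp flip: power_mult_distrib)
  have "(1 + x)^(2*n+1) = (\<Sum>k\<le>2*n+1. of_nat ((2*n+1) choose k) * x^k)"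
    using binomial_ring[of x 1 "2*n+1"] by (simp add: add.commute)
  also have "\<dots> = (\<Sum>k\<le>n. of_nat ((2*n+1) choose k) * x^k) + (\<Sum>k\<in>{n<..2*n+1}. of_nat ((2*n+1) choose k) * x^k)"
  proof -
    have "{..2*n+1} = {..n} \<union> {n<..2*n+1}"
      by auto
    then show ?thesis
      by (simp only:) (rule sum.union_disjoint, auto)
  qed
  also have "(\<Sum>k\<in>{n<..2*n+1}. of_nat ((2*n+1) choose k) * x^k) = (\<Sum>k\<le>n. of_nat ((2*n+1) choose k) * x^(2*n+1-k))"
    by (rule sum.reindex_bij_witness[of _ "\<lambda>k. 2*n+1-k" "\<lambda>k. 2*n+1-k"])
       (auto simp: binomial_symmetric [symmetric])
  finally have "(1 + x)^(2*n+1) * y^n = (\<Sum>k\<le>n. of_nat ((2*n+1) choose k) * (x^k * y^n + x^(2*n+1-k) * y^n))"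
    by (simp add: algebra_simps sum.distrib sum_distrib_left sum_distrib_right)
  also have "\<dots> = (\<Sum>k\<le>n. of_nat ((2*n+1) choose k) * (y^(n-k) + x^(n+1-k)))"
  proof (rule sum.cong)
    fix k assume "k \<in> {..n}"
    then have "n = k + (n-k)" and "2*n+1-k = (n+1-k) + n"
      by simp_all
    then have "x^k * y^n = (x^k * y^k) * y^(n-k)" and "x^(2*n+1-k) * y^n = x^(n+1-k) * (x^n * y^n)"
      by (metis power_add mult.assoc)+
    then show "of_nat ((2*n+1) choose k) * (x^k * y^n + x^(2*n+1-k) * y^n)
        = of_nat ((2*n+1) choose k) * (y^(n-k) + x^(n+1-k))"
      by (simp add: xy)
  qed simp
  finally show ?thesis .
qed

lemma Re_plus_Im_binom_col_poly: "Re (binom_col_poly n (1 - \<i>)) + Im (binom_col_poly n (1 - \<i>)) = 2^n"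
proof -
  define S where "S = binom_col_poly n (1 - \<i>)"
  have S: "S = (\<Sum>k\<le>n. of_nat ((2*n+1) choose k) * (-\<i>)^(n-k))"
    using binom_col_poly_shift[of n "-\<i>"] by (simp add: S_def)
  have "\<i> * cnj S = (\<Sum>k\<le>n. of_nat ((2*n+1) choose k) * \<i>^(n+1-k))"
    by (simp add: S cnj_sum sum_distrib_left mult_ac Suc_diff_le)
  then have "S + \<i> * cnj S = (1 + \<i>)^(2*n+1) * (-\<i>)^n"
    using binomial_odd_power_split[of "\<i>" "-\<i>" n] by (simp add: S sum.distrib algebra_simps)
  also have "\<dots> = (1 + \<i>) * (((1 + \<i>)^2)^n * (-\<i>)^n)"
    by (simp add: power_mult)
  also have "\<dots> = (1 + \<i>) * ((1 + \<i>)^2 * (-\<i>))^n"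
    by (simp only: power_mult_distrib)
  also have "(1 + \<i>)^2 * (-\<i>) = 2"
    by (simp add: power2_eq_square algebra_simps)
  finally have "Re (S + \<i> * cnj S) = 2^n"
    by simp
  then show ?thesis
    by (simp add: S_def)
qed

lemma Im_binom_col_sum_Suc:
  "(2 * real n + 2) * Im (binom_col_sum (n+1) (1 - \<i>)) = 4 * (2 * real n + 1) * Im (binom_col_sum n (1 - \<i>)) - 2^(n+1)"
proof -
  have "of_nat (2*n+2) * binom_col_sum (n+1) (1 - \<i>) - of_nat (4*(2*n+1)) * binom_col_sum n (1 - \<i>)
      = 2 * (1 - \<i>) * binom_col_poly n (1 - \<i>) - 4 * (binom_col_poly n (1 - \<i>) - of_nat ((2*n) choose n))"
    by (rule binom_col_sum_Suc)
  also have "\<dots> = 4 * of_nat ((2*n) choose n) - 2 * ((1 + \<i>) * binom_col_poly n (1 - \<i>))"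
    by (simp add: algebra_simps)
  finally have "of_nat (2*n+2) * binom_col_sum (n+1) (1 - \<i>) - of_nat (4*(2*n+1)) * binom_col_sum n (1 - \<i>)
      = 4 * of_nat ((2*n) choose n) - 2 * ((1 + \<i>) * binom_col_poly n (1 - \<i>))" .
  from arg_cong[where f = Im, OF this]
  have "(2 * real n + 2) * Im (binom_col_sum (n+1) (1 - \<i>)) - 4 * (2 * real n + 1) * Im (binom_col_sum n (1 - \<i>))
      = - 2 * (Re (binom_col_poly n (1 - \<i>)) + Im (binom_col_poly n (1 - \<i>)))"
    by (simp add: algebra_simps)
  then show ?thesis
    by (simp add: Re_plus_Im_binom_col_poly)
qed

lemma Im_one_minus_i_power:
  "Im ((1 - \<i>)^k) = (-1)^k * 2 powr (real k / 2) * sin (3 * real k * pi / 4)"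
proof -
  have angle: "3 * pi / 4 = pi - pi / 4"
    by simp
  have cos: "cos (3 * pi / 4) = - (sqrt 2 / 2)" and sin: "sin (3 * pi / 4) = sqrt 2 / 2"
    unfolding angle cos_pi_minus sin_pi_minus by (simp_all add: cos_45 sin_45)
  have polar: "1 - \<i> = - (of_real (sqrt 2) * cis (3 * pi / 4))"
    by (simp add: complex_eq_iff cos sin)
  have "(1 - \<i>)^k = (-1)^k * (of_real (sqrt 2) * cis (3 * pi / 4))^k"
    unfolding polar by (rule power_minus)
  also have "\<dots> = of_real ((-1)^k * sqrt 2 ^ k) * cis (real k * (3 * pi / 4))"
    by (simp only: power_mult_distrib Complex.DeMoivre of_real_mult of_real_power of_real_minus of_real_1 mult.assoc)
  finally have "Im ((1 - \<i>)^k) = (-1)^k * sqrt 2 ^ k * sin (real k * (3 * pi / 4))"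
    by simp
  moreover have "sqrt 2 ^ k = 2 powr (real k / 2)"
    by (simp add: powr_half_sqrt_powr real_sqrt_power powr_realpow)
  ultimately show ?thesis
    by (simp add: mult_ac)
qed

lemma sum_sin_eq_Im_binom_col_sum:
  "(\<Sum>k=1..n. (-1)^k * real ((2*n-k) choose n) * (2 powr (real k / 2) / real k) * sin (3 * real k * pi / 4))
     = Im (binom_col_sum n (1 - \<i>))"
  unfolding binom_col_sum_def Im_sum
  by (intro sum.cong refl) (simp add: Im_one_minus_i_power Im_divide_of_nat)

lemma dfact_pos: "dfact m > 0"
  by (induction m rule: dfact.induct) auto

lemma wallis_integral_closed_form:
  "real (2*n+1) * wallis_integral n
     = real (dfact (2*n+1)) / real (dfact (2*n)) * (pi / 4)
       + real (2*n+1) / 2^(2*n) * Im (binom_col_sum n (1 - \<i>))"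
proof (induction n)
  case 0
  then show ?case
    by (simp add: wallis_integral_0 binom_col_sum_def)
next
  case (Suc n)
  define P :: real where "P = 2^n"
  define D where "D = real (dfact (2*n+1)) / real (dfact (2*n))"
  define U where "U = Im (binom_col_sum n (1 - \<i>))"
  have "P > 0"
    by (simp add: P_def)
  have pw: "(2::real)^(2*n) = P^2" "(2::real)^(2*(n+1)) = 4 * P^2" "(2::real)^(n+1) = 2 * P"
    by (simp_all add: P_def power_mult power_mult_distrib flip: power_mult)
  have D': "real (dfact (2*(n+1)+1)) / real (dfact (2*(n+1))) = (2 * real n + 3) / (2 * real n + 2) * D"
    using dfact_pos[of "2*n"] by (simp add: D_def field_simps numeral_eq_Suc)
  have IH: "(2 * real n + 1) * wallis_integral n = D * (pi / 4) + (2 * real n + 1) / P^2 * U"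
    using Suc.IH[folded D_def U_def, unfolded pw] by (simp add: algebra_simps)
  have W': "wallis_integral (n+1) = ((2 * real n + 1) * wallis_integral n - 1 / (2 * P)) / (2 * real n + 2)"
    using wallis_integral_Suc[of n, unfolded pw] by (simp add: field_simps)
  have U': "Im (binom_col_sum (n+1) (1 - \<i>)) = (4 * (2 * real n + 1) * U - 2 * P) / (2 * real n + 2)"
    using Im_binom_col_sum_Suc[of n, folded U_def, unfolded pw] by (simp add: field_simps)
  have "(2 * real n + 1) * wallis_integral n - 1 / (2 * P) = D * (pi / 4) + (4 * (2 * real n + 1) * U - 2 * P) / (4 * P^2)"
    unfolding IH using \<open>P > 0\<close> by (simp add: field_simps power2_eq_square)
  with W' have "real (2*(n+1)+1) * wallis_integral (n+1)
      = (2 * real n + 3) / (2 * real n + 2) * (D * (pi / 4) + (4 * (2 * real n + 1) * U - 2 * P) / (4 * P^2))"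
    by simp
  also have "\<dots> = (2 * real n + 3) / (2 * real n + 2) * D * (pi / 4)
      + (2 * real n + 3) / (4 * P^2) * ((4 * (2 * real n + 1) * U - 2 * P) / (2 * real n + 2))"
    by (simp add: distrib_left mult.commute)
  also have "\<dots> = real (dfact (2*(n+1)+1)) / real (dfact (2*(n+1))) * (pi / 4)
        + real (2*(n+1)+1) / 2^(2*(n+1)) * Im (binom_col_sum (n+1) (1 - \<i>))"
    unfolding D' U' pw by simp
  finally show ?case
    by simp
qed

theorem corollary4p1:
  fixes n :: nat
  shows "hyp2F1 (of_nat n + 1/2) (of_nat n + 1) (of_nat n + 3/2) (-1) =
    complex_of_real
      (real (dfact (2*n+1)) / real (dfact (2*n)) * (pi / 4)
       + real (2*n+1) / 2 ^ (2*n) *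
         (\<Sum>k=1..n. (-1) ^ k * real ((2*n - k) choose n) * (2 powr (real k / 2) / real k)
                     * sin (3 * real k * pi / 4)))"
proof -
  have "hyp2F1 (of_nat n + 1/2) (of_nat n + 1) (of_nat n + 3/2) (-1) = of_nat (2*n+1) * euler_integral n (-1)"
    by (rule hyp2F1_eq_euler_integral) (simp add: mem_cut_plane_iff)
  also have "\<dots> = of_real (real (2*n+1) * wallis_integral n)"
    by (simp add: euler_integral_minus_one)
  finally show ?thesis
    by (simp only: wallis_integral_closed_form sum_sin_eq_Im_binom_col_sum)
qed

end
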